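(* Let $(\mathbb{S}^2,d_H)$ be the doubled hexagon described in the context. The minimum of the lengths of the nonconstant restricted closed geodesics of $(\mathbb{S}^2,d_H)$ equals $4$. This minimum is attained, for instance, by the restricted closed geodesic whose projection $p\circ\gamma$ traverses the vertical segment from $-i$ to $i$ in $H$ (a segment orthogonal to two opposite edges of $H$) once in each copy of $H$, i.e. back and forth.
   Context: Identify $\mathbb{R}^2$ with $\mathbb{C}$. Let $H$ be the closed regular hexagon with vertices $\frac{2}{\sqrt3}e^{ik\pi/3}$, $k=0,\dots,5$ (so the distance from the center to each edge is $1$). For $k=0,1,2$ let $L_k=\{te^{i(\pi/6+2k\pi/3)}: t\in\mathbb{R}\}$, $\overline{L_k}=\{te^{i(\pi/6+2k\pi/3)}: t\in[0,1]\}$, $\pi_k$ the orthogonal projection of $\mathbb{C}$ onto $L_k$, and for a set $A\subset H$ let $\overline{\pi_k}(A)=\pi_k(A)\cap\overline{L_k}$; $|\cdot|$ denotes one-dimensional Lebesgue measure on $L_k$. For a straight segment $\sigma\subset H$ set $\ell(\sigma)=\sum_{k=0}^{2}|\overline{\pi_k}(\sigma)|$ (this is the length of $\sigma$ for the pseudo-metric $d_H$ on $H$ defined as the infimum of $\sum_k|\overline{\pi_k}(\gamma([0,1]))|$ over piecewise smooth curves $\gamma$ joining two points). Let $\mathbb{S}^2$ be obtained from two copies $H_1,H_2$ of $H$ by identifying corresponding boundary points, and let $p:\mathbb{S}^2\to H$ be the canonical projection; let $V$ be the set of the six vertices. A restricted closed geodesic is a nonconstant closed curve $\gamma$ in $\mathbb{S}^2\setminus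 V$ made of finitely many straight segments $\sigma_1,\dots,\sigma_N$ (cyclically ordered), each contained in one copy $H_j$ and joining two points in the interiors of edges, consecutive segments lying in different copies (so $N$ is even), such that $p\circ\gamma$ is a periodic billiard trajectory in $H$: at each edge point the direction of the next segment is the mirror reflection across that edge of the direction of the previous segment (angle of incidence equals angle of reflection). Its length is $\sum_{j=1}^N\ell(p(\sigma_j))$. *)

theory Defs
  imports "HOL-Analysis.Analysis"
begin

text \<open>The hexagon H: vertices hex_vert k = (2/sqrt 3) e^{i k pi/3}; edge k joins
  hex_vert k and hex_vert (k+1); its outward unit normal is e^{i(pi/6 + k pi/3)}.\<close>

definition hex_vert :: "nat \<Rightarrow> complex" where
  "hex_vert k = complex_of_real (2 / sqrt 3) * cis (real k * pi / 3)"

definition hex_normal :: "nat \<Rightarrow> complex" where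
  "hex_normal k = cis (pi / 6 + real k * pi / 3)"

definition edge_interior :: "nat \<Rightarrow> complex set" where
  "edge_interior k = open_segment (hex_vert k) (hex_vert (Suc k))"

definition edge_reflect :: "nat \<Rightarrow> complex \<Rightarrow> complex" where
  "edge_reflect k d = d - complex_of_real (2 * Re (d * cnj (hex_normal k))) * hex_normal k"

definition L_dir :: "nat \<Rightarrow> complex" where
  "L_dir k = cis (pi / 6 + 2 * real k * pi / 3)"

text \<open>|pi_k-bar(A)|: Lebesgue measure of pi_k(A) \<inter> L_k-bar, with L_k parametrised
  isometrically by t \<mapsto> t * L_dir k (so L_k-bar corresponds to t \<in> [0,1]).\<close>
definition proj_len :: "nat \<Rightarrow> complex set \<Rightarrow> real" where
  "proj_len k A = measure lborel {t::real. t \<in> {0..1} \<and> (\<exists>z\<in>A. Re (z * cnj (L_dir k)) = t)}"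

definition seg_len :: "complex \<Rightarrow> complex \<Rightarrow> real" where
  "seg_len a b = (\<Sum>k<3. proj_len k (closed_segment a b))"

text \<open>A restricted closed geodesic is encoded by the cyclic list xs of its break
  points x_0,...,x_{N-1} (points in interiors of edges); segment j joins x_j and
  x_{(j+1) mod N}. Consecutive segments lie in different copies of H, which is possible
  exactly when N is even (the copies alternate).\<close>
definition restricted_closed_geodesic :: "complex list \<Rightarrow> bool" where
  "restricted_closed_geodesic xs \<longleftrightarrow>
     (let N = length xs in
       N \<noteq> 0 \<and> even N \<and>
       (\<forall>j<N. \<exists>k<6. xs ! j \<in> edge_interior k) \<and>
       (\<forall>j<N. xs ! j \<noteq> xs ! ((j + 1) mod N)) \<and>
       (\<forall>j<N. \<forall>k<6. xs ! ((j + 1) mod N) \<in> edge_interior k \<longrightarrow>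
          (\<exists>c>0. xs ! ((j + 2) mod N) - xs ! ((j + 1) mod N) =
                  complex_of_real c * edge_reflect k (xs ! ((j + 1) mod N) - xs ! j))))"

definition geodesic_length :: "complex list \<Rightarrow> real" where
  "geodesic_length xs = (\<Sum>j<length xs. seg_len (xs ! j) (xs ! ((j + 1) mod length xs)))"

end

theory Submission
  imports Defs
begin

text \<open>On the boundary of H the three clamped projection coordinates P0, P1, P2 (onto the
  unit segments of the lines L_k) sum to 1, so the boundary is mapped onto the boundary of the
  standard 2-simplex, and the length of a chord is the l1-distance of the images. The edges 0, 2, 4
  go to vertices, the edges 1, 3, 5 onto sides of the simplex; hence a chord between two of the
  former edges has length 2, and every chord is at least twice as long as the change of any sum of
  coordinates along it. Reflection in a side edge preserves the coordinate along that edge, which is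
  therefore monotone on the two chords meeting there; this forces them to have total length at
  least 2, and length at least 2 each if the trajectory comes straight back. A closed trajectory
  with at least four chords contains two disjoint such pairs, and one with two chords comes
  straight back.\<close>

section \<open>Lengths of chords\<close>

lemma twice_abs_partial_sum_le_sum_abs:
  fixes d :: "'a \<Rightarrow> 'b::linordered_idom"
  assumes "finite A" "B \<subseteq> A" "(\<Sum>i\<in>A. d i) = 0"
  shows "2 * \<bar>\<Sum>i\<in>B. d i\<bar> \<le> (\<Sum>i\<in>A. \<bar>d i\<bar>)"
proof -
  have split: "(\<Sum>i\<in>A. f i) = (\<Sum>i\<in>B. f i) + (\<Sum>i\<in>A - B. f i)" for f :: "'a \<Rightarrow> 'b"
    using assms(1,2) by (metis add.commute sum.subset_diff)
  have "\<bar>\<Sum>i\<in>B. d i\<bar> = \<bar>\<Sum>i\<in>A - B. d i\<bar>"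
    using split[of d] assms(3) by (simp add: eq_neg_iff_add_eq_0 [symmetric])
  moreover have "\<bar>\<Sum>i\<in>B. d i\<bar> \<le> (\<Sum>i\<in>B. \<bar>d i\<bar>)" "\<bar>\<Sum>i\<in>A - B. d i\<bar> \<le> (\<Sum>i\<in>A - B. \<bar>d i\<bar>)"
    by (rule sum_abs)+
  ultimately show ?thesis
    using split[of "\<lambda>i. \<bar>d i\<bar>"] by linarith
qed

lemma sum_lessThan_shift_periodic:
  fixes f :: "nat \<Rightarrow> 'a::cancel_comm_monoid_add"
  assumes "\<And>i. f (i + N) = f i"
  shows "(\<Sum>i<N. f (j + i)) = (\<Sum>i<N. f i)"
proof (induction j)
  case (Suc j)
  have "(\<Sum>i<N. f (Suc j + i)) + f j = (\<Sum>i<Suc N. f (j + i))"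
    by (subst sum.lessThan_Suc_shift) (simp add: add.commute)
  also have "\<dots> = (\<Sum>i<N. f (j + i)) + f j"
    using assms[of j] by (simp add: add.commute)
  finally show ?case
    using Suc.IH by simp
qed simp

definition clamp01 :: "real \<Rightarrow> real" where
  "clamp01 t = max 0 (min 1 t)"

lemma measure_unit_interval_inter_closed_segment:
  fixes p q :: real
  shows "measure lborel ({0..1} \<inter> closed_segment p q) = \<bar>clamp01 q - clamp01 p\<bar>"
proof -
  have "{0..1} \<inter> closed_segment p q = {max 0 (min p q) .. min 1 (max p q)}"
    by (auto simp: closed_segment_eq_real_ivl)
  moreover have "measure lborel {max 0 (min p q) .. min 1 (max p q)} = \<bar>clamp01 q - clamp01 p\<bar>"
    by (cases "max 0 (min p q) \<le> min 1 (max p q)")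
       (auto simp: clamp01_def max_def min_def split: if_splits)
  ultimately show ?thesis
    by simp
qed

definition proj_coord :: "nat \<Rightarrow> complex \<Rightarrow> real" where
  "proj_coord k z = clamp01 (Re (z * cnj (L_dir k)))"

lemma proj_len_closed_segment:
  "proj_len k (closed_segment a b) = \<bar>proj_coord k b - proj_coord k a\<bar>"
proof -
  define F where "F z = Re (z * cnj (L_dir k))" for z
  have "linear F"
    unfolding F_def by (rule linearI) (auto simp: algebra_simps scaleR_conv_of_real)
  have "{t. t \<in> {0..1} \<and> (\<exists>z\<in>closed_segment a b. F z = t)} =
      {0..1} \<inter> F ` closed_segment a b"
    by auto
  also have "F ` closed_segment a b = closed_segment (F a) (F b)"
    using \<open>linear F\<close> by (simp add: closed_segment_linear_image)
  finally have "{t. t \<in> {0..1} \<and> (\<exists>z\<in>closed_segment a b. F z = t)} =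
      {0..1} \<inter> closed_segment (F a) (F b)" .
  then show ?thesis
    unfolding proj_len_def proj_coord_def F_def[symmetric]
    by (simp add: measure_unit_interval_inter_closed_segment)
qed

lemma seg_len_eq_sum_proj_coord:
  "seg_len a b = (\<Sum>k<3. \<bar>proj_coord k b - proj_coord k a\<bar>)"
  by (simp add: seg_len_def proj_len_closed_segment)

lemma proj_coord_nonneg: "proj_coord k z \<ge> 0"
  by (simp add: proj_coord_def clamp01_def)

lemma seg_len_commute: "seg_len a b = seg_len b a"
  by (simp add: seg_len_eq_sum_proj_coord abs_minus_commute)

lemma seg_len_nonneg: "seg_len a b \<ge> 0"
  by (simp add: seg_len_eq_sum_proj_coord sum_nonneg)

section \<open>Coordinates adapted to the hexagon\<close>

definition \<zeta> :: complex where
  "\<zeta> = Complex (1/2) (sqrt 3 / 2)"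

lemma Re_zeta [simp]: "Re \<zeta> = 1/2" and Im_zeta [simp]: "Im \<zeta> = sqrt 3 / 2"
  by (simp_all add: \<zeta>_def)

lemma zeta_powers:
  "\<zeta> ^ 2 = Complex (-1/2) (sqrt 3 / 2)" "\<zeta> ^ 3 = -1" "\<zeta> ^ 4 = -\<zeta>" "\<zeta> ^ 5 = - (\<zeta> ^ 2)" "\<zeta> ^ 6 = 1"
proof -
  show sq: "\<zeta> ^ 2 = Complex (-1/2) (sqrt 3 / 2)"
    by (simp add: power2_eq_square \<zeta>_def complex_eq_iff)
  show cube: "\<zeta> ^ 3 = -1"
    by (simp add: power_numeral_reduce sq \<zeta>_def complex_eq_iff)
  show "\<zeta> ^ 4 = -\<zeta>" "\<zeta> ^ 5 = - (\<zeta> ^ 2)" "\<zeta> ^ 6 = 1"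
    using power_add[of \<zeta> 3 1] power_add[of \<zeta> 3 2] power_add[of \<zeta> 3 3] cube by simp_all
qed

lemma cis_pi_third_multiple: "cis (real k * pi / 3) = \<zeta> ^ k"
proof -
  have "cis (pi / 3) = \<zeta>"
    by (simp add: \<zeta>_def complex_eq_iff cos_60 sin_60)
  then show ?thesis
    using Complex.DeMoivre[of "pi / 3" k] by simp
qed

lemma cis_pi_sixth: "cis (pi / 6) = Complex (sqrt 3 / 2) (1/2)"
  by (simp add: complex_eq_iff cos_30 sin_30)

text \<open>In the coordinates (hex_x z, Im z) the vertices of H are (\<plusminus>2, 0) and (\<plusminus>1, \<plusminus>1), so all
  edges have equations with integer coefficients.\<close>

definition hex_x :: "complex \<Rightarrow> real" where
  "hex_x z = sqrt 3 * Re z"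

lemma hex_vert_eq: "hex_vert k = of_real (2 / sqrt 3) * \<zeta> ^ k"
  by (simp add: hex_vert_def cis_pi_third_multiple)

lemma hex_vert_coords:
  "hex_x (hex_vert 0) = 2"  "Im (hex_vert 0) = 0"
  "hex_x (hex_vert 1) = 1"  "Im (hex_vert 1) = 1"
  "hex_x (hex_vert 2) = -1" "Im (hex_vert 2) = 1"
  "hex_x (hex_vert 3) = -2" "Im (hex_vert 3) = 0"
  "hex_x (hex_vert 4) = -1" "Im (hex_vert 4) = -1"
  "hex_x (hex_vert 5) = 1"  "Im (hex_vert 5) = -1"
  "hex_x (hex_vert 6) = 2"  "Im (hex_vert 6) = 0"
  by (simp_all add: hex_vert_eq zeta_powers hex_x_def)

lemma hex_normal_coords:
  "hex_normal 0 = Complex (sqrt 3 / 2) (1/2)"  "hex_normal 1 = Complex 0 1"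
  "hex_normal 2 = Complex (- sqrt 3 / 2) (1/2)" "hex_normal 3 = Complex (- sqrt 3 / 2) (-1/2)"
  "hex_normal 4 = Complex 0 (-1)"            "hex_normal 5 = Complex (sqrt 3 / 2) (-1/2)"
proof -
  have "hex_normal k = Complex (sqrt 3 / 2) (1/2) * \<zeta> ^ k" for k
    unfolding hex_normal_def
    by (simp add: cis_pi_third_multiple flip: cis_pi_sixth cis_mult add_divide_distrib)
  then show "hex_normal 0 = Complex (sqrt 3 / 2) (1/2)"  "hex_normal 1 = Complex 0 1"
    "hex_normal 2 = Complex (- sqrt 3 / 2) (1/2)" "hex_normal 3 = Complex (- sqrt 3 / 2) (-1/2)"
    "hex_normal 4 = Complex 0 (-1)" "hex_normal 5 = Complex (sqrt 3 / 2) (-1/2)"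
    by (simp_all add: zeta_powers) (simp_all add: \<zeta>_def complex_eq_iff)
qed

lemma L_dir_coords:
  "L_dir 0 = Complex (sqrt 3 / 2) (1/2)" "L_dir 1 = Complex (- sqrt 3 / 2) (1/2)"
  "L_dir 2 = Complex 0 (-1)"
proof -
  have "L_dir k = Complex (sqrt 3 / 2) (1/2) * \<zeta> ^ (2 * k)" for k
  proof -
    have "pi / 6 + 2 * real k * pi / 3 = pi / 6 + real (2 * k) * pi / 3"
      by simp
    then show ?thesis
      unfolding L_dir_def by (simp only: flip: cis_pi_sixth cis_pi_third_multiple cis_mult)
  qed
  then show "L_dir 0 = Complex (sqrt 3 / 2) (1/2)" "L_dir 1 = Complex (- sqrt 3 / 2) (1/2)"
    "L_dir 2 = Complex 0 (-1)"
    by (simp_all add: zeta_powers) (simp_all add: \<zeta>_def complex_eq_iff)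
qed

definition on_edge :: "nat \<Rightarrow> complex \<Rightarrow> bool" where
  "on_edge k z \<longleftrightarrow>
     (k = 0 \<and> hex_x z + Im z = 2 \<and> 0 < Im z \<and> Im z < 1) \<or>
     (k = 1 \<and> Im z = 1 \<and> -1 < hex_x z \<and> hex_x z < 1) \<or>
     (k = 2 \<and> Im z - hex_x z = 2 \<and> 0 < Im z \<and> Im z < 1) \<or>
     (k = 3 \<and> hex_x z + Im z = -2 \<and> -1 < Im z \<and> Im z < 0) \<or>
     (k = 4 \<and> Im z = -1 \<and> -1 < hex_x z \<and> hex_x z < 1) \<or>
     (k = 5 \<and> hex_x z - Im z = 2 \<and> -1 < Im z \<and> Im z < 0)"

lemma proj_coord_hex:
  "proj_coord 0 z = clamp01 ((hex_x z + Im z) / 2)"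
  "proj_coord 1 z = clamp01 ((Im z - hex_x z) / 2)"
  "proj_coord 2 z = clamp01 (- Im z)"
  by (simp_all only: proj_coord_def L_dir_coords) (simp_all add: hex_x_def field_simps)

lemma on_edge_if_in_edge_interior:
  assumes "k < 6" "z \<in> edge_interior k"
  shows "on_edge k z"
proof -
  obtain u where u: "0 < u" "u < 1" "z = (1 - u) *\<^sub>R hex_vert k + u *\<^sub>R hex_vert (Suc k)"
    using assms(2) unfolding edge_interior_def in_segment by blast
  have "hex_x z = (1 - u) * hex_x (hex_vert k) + u * hex_x (hex_vert (Suc k))"
    "Im z = (1 - u) * Im (hex_vert k) + u * Im (hex_vert (Suc k))"
    unfolding u(3) by (simp_all add: hex_x_def algebra_simps)
  moreover have "k = 0 \<or> k = 1 \<or> k = 2 \<or> k = 3 \<or> k = 4 \<or> k = 5"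
    using assms(1) by auto
  ultimately show ?thesis
    using u(1,2)
    by (elim disjE) (simp_all add: on_edge_def hex_vert_coords algebra_simps flip: One_nat_def numeral_2_eq_2)
qed

lemma on_edge_less_6: "on_edge k z \<Longrightarrow> k < 6"
  by (auto simp: on_edge_def)

lemma seg_len_eq:
  "seg_len a b = \<bar>proj_coord 0 b - proj_coord 0 a\<bar> + \<bar>proj_coord 1 b - proj_coord 1 a\<bar>
     + \<bar>proj_coord 2 b - proj_coord 2 a\<bar>"
proof -
  have "(\<Sum>k<3. f k) = f 0 + f 1 + f 2" for f :: "nat \<Rightarrow> real"
    by (simp add: eval_nat_numeral)
  then show ?thesis
    by (simp add: seg_len_eq_sum_proj_coord)
qed

lemma proj_coord_on_edge:
  assumes "on_edge k z"
  shows "k = 0 \<Longrightarrow> proj_coord 0 z = 1 \<and> proj_coord 1 z = 0 \<and> proj_coord 2 z = 0"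
    "k = 1 \<Longrightarrow> proj_coord 0 z = (hex_x z + 1) / 2 \<and> proj_coord 1 z = (1 - hex_x z) / 2 \<and> proj_coord 2 z = 0"
    "k = 2 \<Longrightarrow> proj_coord 0 z = 0 \<and> proj_coord 1 z = 1 \<and> proj_coord 2 z = 0"
    "k = 3 \<Longrightarrow> proj_coord 0 z = 0 \<and> proj_coord 1 z = 1 + Im z \<and> proj_coord 2 z = - Im z"
    "k = 4 \<Longrightarrow> proj_coord 0 z = 0 \<and> proj_coord 1 z = 0 \<and> proj_coord 2 z = 1"
    "k = 5 \<Longrightarrow> proj_coord 0 z = 1 + Im z \<and> proj_coord 1 z = 0 \<and> proj_coord 2 z = - Im z"
  using assms by (auto simp: on_edge_def proj_coord_hex clamp01_def simp del: One_nat_def)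

lemma sum_proj_coord_on_edge:
  assumes "on_edge k z"
  shows "(\<Sum>l<3. proj_coord l z) = 1"
proof -
  have "k = 0 \<or> k = 1 \<or> k = 2 \<or> k = 3 \<or> k = 4 \<or> k = 5"
    using on_edge_less_6[OF assms] by auto
  then show ?thesis
    using proj_coord_on_edge[OF assms] by (auto simp: eval_nat_numeral)
qed

lemma twice_abs_sum_proj_coord_diff_le_seg_len:
  assumes "on_edge ka a" "on_edge kb b" "B \<subseteq> {..<3}"
  shows "2 * \<bar>\<Sum>l\<in>B. proj_coord l b - proj_coord l a\<bar> \<le> seg_len a b"
  using twice_abs_partial_sum_le_sum_abs[OF _ assms(3), of "\<lambda>l. proj_coord l b - proj_coord l a"]
    sum_proj_coord_on_edge[OF assms(1)] sum_proj_coord_on_edge[OF assms(2)]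
  by (simp add: seg_len_eq_sum_proj_coord sum_subtractf)

lemma twice_abs_proj_coord_diff_le_seg_len:
  assumes "on_edge ka a" "on_edge kb b" "l < 3"
  shows "2 * \<bar>proj_coord l b - proj_coord l a\<bar> \<le> seg_len a b"
  using twice_abs_sum_proj_coord_diff_le_seg_len[OF assms(1,2), of "{l}"] assms(3) by simp

lemma seg_len_corner_edges:
  assumes "on_edge ka a" "on_edge kb b" "ka \<noteq> kb" "ka \<in> {0, 2, 4}" "kb \<in> {0, 2, 4}"
  shows "seg_len a b = 2"
  using assms proj_coord_on_edge[OF assms(1)] proj_coord_on_edge[OF assms(2)]
  unfolding seg_len_eq by auto

definition normal_coord :: "nat \<Rightarrow> complex \<Rightarrow> real" where
  "normal_coord k z = Re (z * cnj (hex_normal k))"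

lemma normal_coord_hex:
  "normal_coord 0 z = (hex_x z + Im z) / 2" "normal_coord 1 z = Im z"
  "normal_coord 2 z = (Im z - hex_x z) / 2" "normal_coord 3 z = - (hex_x z + Im z) / 2"
  "normal_coord 4 z = - Im z" "normal_coord 5 z = (hex_x z - Im z) / 2"
  by (simp_all only: normal_coord_def hex_normal_coords) (simp_all add: hex_x_def field_simps)

lemma normal_coord_eq_1_iff:
  assumes "on_edge k' z" "k < 6"
  shows "normal_coord k z = 1 \<longleftrightarrow> k = k'"
proof -
  have "k = 0 \<or> k = 1 \<or> k = 2 \<or> k = 3 \<or> k = 4 \<or> k = 5"
    using assms(2) by auto
  then show ?thesis
    using assms(1) by (elim disjE) (auto simp: normal_coord_hex on_edge_def simp del: One_nat_def)
qed

lemma edge_interior_disjoint: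
  assumes "k < 6" "k' < 6" "z \<in> edge_interior k" "z \<in> edge_interior k'"
  shows "k = k'"
  using normal_coord_eq_1_iff[OF on_edge_if_in_edge_interior[OF assms(2,4)] assms(1)]
    normal_coord_eq_1_iff[OF on_edge_if_in_edge_interior[OF assms(1,3)] assms(1)]
  by simp

lemma normal_coord_diff: "normal_coord k (a - b) = normal_coord k a - normal_coord k b"
  and normal_coord_of_real_mult: "normal_coord k (of_real c * w) = c * normal_coord k w"
  by (simp_all add: normal_coord_def algebra_simps)

lemma edge_reflect_eq_self: "normal_coord k w = 0 \<Longrightarrow> edge_reflect k w = w"
  by (simp add: edge_reflect_def normal_coord_def)

definition tangent_coord :: "nat \<Rightarrow> complex \<Rightarrow> real" where
  "tangent_coord k z = Re (z * cnj (\<i> * hex_normal k))"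

lemma tangent_coord_diff: "tangent_coord k (a - b) = tangent_coord k a - tangent_coord k b"
  and tangent_coord_of_real_mult: "tangent_coord k (of_real c * w) = c * tangent_coord k w"
  by (simp_all add: tangent_coord_def algebra_simps)

lemma tangent_coord_edge_reflect: "tangent_coord k (edge_reflect k d) = tangent_coord k d"
  by (simp add: edge_reflect_def tangent_coord_def algebra_simps)

lemma tangent_coord_le_iff:
  "tangent_coord 1 a \<le> tangent_coord 1 b \<longleftrightarrow> hex_x b \<le> hex_x a"
  "tangent_coord 3 a \<le> tangent_coord 3 b \<longleftrightarrow> hex_x a - 3 * Im a \<le> hex_x b - 3 * Im b"
  "tangent_coord 5 a \<le> tangent_coord 5 b \<longleftrightarrow> hex_x a + 3 * Im a \<le> hex_x b + 3 * Im b"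
proof -
  have "tangent_coord 1 z = - hex_x z / sqrt 3"
    "tangent_coord 3 z = (hex_x z - 3 * Im z) / (2 * sqrt 3)"
    "tangent_coord 5 z = (hex_x z + 3 * Im z) / (2 * sqrt 3)" for z
    by (simp_all only: tangent_coord_def hex_normal_coords) (simp_all add: hex_x_def field_simps)
  then show "tangent_coord 1 a \<le> tangent_coord 1 b \<longleftrightarrow> hex_x b \<le> hex_x a"
    "tangent_coord 3 a \<le> tangent_coord 3 b \<longleftrightarrow> hex_x a - 3 * Im a \<le> hex_x b - 3 * Im b"
    "tangent_coord 5 a \<le> tangent_coord 5 b \<longleftrightarrow> hex_x a + 3 * Im a \<le> hex_x b + 3 * Im b"
    by (simp_all add: divide_le_cancel)
qed

lemma side_edge_separating_coords:
  assumes "kb \<in> {1, 3, 5}" "on_edge kb b"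
  obtains i j where "i < 3" "j < 3" "i \<noteq> j" "proj_coord i b + proj_coord j b = 1"
    "\<And>a ka. on_edge ka a \<Longrightarrow> ka \<noteq> kb \<Longrightarrow> tangent_coord kb a \<le> tangent_coord kb b \<Longrightarrow>
       proj_coord i a = 0"
    "\<And>a ka. on_edge ka a \<Longrightarrow> ka \<noteq> kb \<Longrightarrow> tangent_coord kb b \<le> tangent_coord kb a \<Longrightarrow>
       proj_coord j a = 0"
proof -
  note simps = on_edge_def proj_coord_hex clamp01_def tangent_coord_le_iff
    add_divide_distrib diff_divide_distrib
  consider "kb = 1" | "kb = 3" | "kb = 5"
    using assms(1) by blast
  then show ?thesis
  proof cases
    case 1
    show ?thesis
      by (rule that[of 1 0]) (use assms(2) 1 in \<open>auto simp: simps simp del: One_nat_def\<close>)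
  next
    case 2
    show ?thesis
      by (rule that[of 2 1]) (use assms(2) 2 in \<open>auto simp: simps simp del: One_nat_def\<close>)
  next
    case 3
    show ?thesis
      by (rule that[of 0 2]) (use assms(2) 3 in \<open>auto simp: simps simp del: One_nat_def\<close>)
  qed
qed

lemma two_le_seg_len_across_side_edge:
  assumes a: "on_edge ka a" and b: "on_edge kb b" and c: "on_edge kc c"
    and side: "kb \<in> {1, 3, 5}" and "ka \<noteq> kb" "kc \<noteq> kb"
    and monotone: "(tangent_coord kb a \<le> tangent_coord kb b \<and> tangent_coord kb b \<le> tangent_coord kb c) \<or>
      (tangent_coord kb b \<le> tangent_coord kb a \<and> tangent_coord kb c \<le> tangent_coord kb b)"
  shows "2 \<le> seg_len a b + seg_len b c"
proof -
  obtain i j where ij: "i < 3" "j < 3" "proj_coord i b + proj_coord j b = 1"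
    and before: "\<And>x kx. on_edge kx x \<Longrightarrow> kx \<noteq> kb \<Longrightarrow> tangent_coord kb x \<le> tangent_coord kb b \<Longrightarrow>
      proj_coord i x = 0"
    and after: "\<And>x kx. on_edge kx x \<Longrightarrow> kx \<noteq> kb \<Longrightarrow> tangent_coord kb b \<le> tangent_coord kb x \<Longrightarrow>
      proj_coord j x = 0"
    using side_edge_separating_coords[OF side b] by metis
  note bound = twice_abs_proj_coord_diff_le_seg_len
  from monotone show ?thesis
  proof (elim disjE conjE)
    assume "tangent_coord kb a \<le> tangent_coord kb b" "tangent_coord kb b \<le> tangent_coord kb c"
    then have "proj_coord i a = 0" "proj_coord j c = 0"
      using before[OF a] after[OF c] assms(5,6) by auto
    then show ?thesis
      using bound[OF a b ij(1)] bound[OF b c ij(2)] ij(3) proj_coord_nonneg[of i b] proj_coord_nonneg[of j b]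
      by simp
  next
    assume "tangent_coord kb b \<le> tangent_coord kb a" "tangent_coord kb c \<le> tangent_coord kb b"
    then have "proj_coord j a = 0" "proj_coord i c = 0"
      using after[OF a] before[OF c] assms(5,6) by auto
    then show ?thesis
      using bound[OF a b ij(2)] bound[OF b c ij(1)] ij(3) proj_coord_nonneg[of i b] proj_coord_nonneg[of j b]
      by simp
  qed
qed

lemma two_le_seg_len_if_tangent_coord_eq:
  assumes a: "on_edge ka a" and b: "on_edge kb b" and side: "kb \<in> {1, 3, 5}" and "ka \<noteq> kb"
    and "tangent_coord kb a = tangent_coord kb b"
  shows "2 \<le> seg_len a b"
proof -
  obtain i j where ij: "i < 3" "j < 3" "i \<noteq> j" "proj_coord i b + proj_coord j b = 1"
    and "proj_coord i a = 0" "proj_coord j a = 0"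
    using side_edge_separating_coords[OF side b] a assms(4,5) by (metis order_refl)
  then have "(\<Sum>l\<in>{i, j}. proj_coord l b - proj_coord l a) = 1"
    by simp
  then show ?thesis
    using twice_abs_sum_proj_coord_diff_le_seg_len[OF a b, of "{i, j}"] ij(1,2) by simp
qed

section \<open>Periodic billiard trajectories\<close>

locale periodic_billiard_trajectory =
  fixes x :: "nat \<Rightarrow> complex" and N :: nat
  assumes periodic: "\<And>j. x (j + N) = x j"
    and period_pos: "N > 0"
    and on_boundary: "\<And>j. \<exists>k<6. x j \<in> edge_interior k"
    and step_nonzero: "\<And>j. x j \<noteq> x (Suc j)"
    and reflection: "\<And>j k. k < 6 \<Longrightarrow> x (Suc j) \<in> edge_interior k \<Longrightarrow>
      \<exists>c>0. x (Suc (Suc j)) - x (Suc j) = of_real c * edge_reflect k (x (Suc j) - x j)"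
begin

definition edge :: "nat \<Rightarrow> nat" where
  "edge j = (SOME k. k < 6 \<and> x j \<in> edge_interior k)"

lemma edge_less_6: "edge j < 6"
  and in_edge_interior_edge: "x j \<in> edge_interior (edge j)"
  using someI_ex[OF on_boundary[of j]] by (simp_all add: edge_def)

lemma on_edge_edge: "on_edge (edge j) (x j)"
  using edge_less_6 in_edge_interior_edge by (rule on_edge_if_in_edge_interior)

lemma edge_periodic: "edge (j + N) = edge j"
  by (simp add: edge_def periodic)

lemma edge_side_or_corner: "edge j \<in> {1, 3, 5} \<or> edge j \<in> {0, 2, 4}"
  using edge_less_6[of j] by auto

definition seg :: "nat \<Rightarrow> real" where
  "seg j = seg_len (x j) (x (Suc j))"

lemma seg_periodic: "seg (j + N) = seg j"
  using periodic[of j] periodic[of "Suc j"] by (simp add: seg_def)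

lemma seg_nonneg: "seg j \<ge> 0"
  by (simp add: seg_def seg_len_nonneg)

lemma reflection_edge:
  obtains c where "c > 0"
    "x (Suc (Suc j)) - x (Suc j) = of_real c * edge_reflect (edge (Suc j)) (x (Suc j) - x j)"
  using reflection[OF edge_less_6 in_edge_interior_edge] by blast

text \<open>A step along an edge is fixed by the reflection in that edge, so the path would run
  along the edge in a fixed direction forever, contradicting periodicity.\<close>

lemma steps_parallel_if_edge_repeats:
  assumes repeat: "edge (Suc j) = edge j"
  shows "edge (j + m) = edge j \<and> (\<exists>c>0. x (Suc (j + m)) - x (j + m) = of_real c * (x (Suc j) - x j))"
proof -
  let ?k = "edge j" and ?w = "x (Suc j) - x j"
  have "normal_coord ?k (x j) = 1" "normal_coord ?k (x (Suc j)) = 1"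
    using normal_coord_eq_1_iff[OF on_edge_edge edge_less_6] repeat by auto
  then have tangent: "normal_coord ?k ?w = 0"
    by (simp add: normal_coord_diff)
  show ?thesis
  proof (induction m)
    case 0
    show ?case
      by (auto intro: exI[of _ 1])
  next
    case (Suc m)
    from Suc.IH obtain c where edge_m: "edge (j + m) = ?k" and "c > 0"
      and step: "x (Suc (j + m)) - x (j + m) = of_real c * ?w"
      by blast
    have "normal_coord ?k (x (Suc (j + m))) = normal_coord ?k (x (j + m))"
      using step tangent normal_coord_diff[of ?k "x (Suc (j + m))" "x (j + m)"]
      by (simp add: normal_coord_of_real_mult)
    then have edge_Suc_m: "edge (Suc (j + m)) = ?k"
      using normal_coord_eq_1_iff[OF on_edge_edge edge_less_6] edge_m by metis
    obtain c' where "c' > 0"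
      and "x (Suc (Suc (j + m))) - x (Suc (j + m)) = of_real c' * edge_reflect ?k (of_real c * ?w)"
      using reflection_edge[of "j + m"] edge_Suc_m step by metis
    moreover have "edge_reflect ?k (of_real c * ?w) = of_real c * ?w"
      using tangent by (simp add: edge_reflect_eq_self normal_coord_of_real_mult)
    ultimately show ?case
      using edge_Suc_m \<open>c > 0\<close> by (auto intro!: exI[of _ "c' * c"])
  qed
qed

lemma edge_Suc_neq: "edge (Suc j) \<noteq> edge j"
proof
  assume repeat: "edge (Suc j) = edge j"
  define w where "w = x (Suc j) - x j"
  define \<Phi> where "\<Phi> m = Re (x (j + m) * cnj w)" for m
  have "\<Phi> (Suc m) - \<Phi> m > 0" for m
  proof -
    obtain c where "c > 0" and "x (Suc (j + m)) - x (j + m) = of_real c * w"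
      using steps_parallel_if_edge_repeats[OF repeat] w_def by blast
    then have "\<Phi> (Suc m) - \<Phi> m = c * Re (w * cnj w)"
      by (simp add: \<Phi>_def algebra_simps flip: minus_complex.sel)
    also have "Re (w * cnj w) = (cmod w)\<^sup>2"
      by (simp add: complex_mult_cnj cmod_def)
    finally have "\<Phi> (Suc m) - \<Phi> m = c * (cmod w)\<^sup>2" .
    then show ?thesis
      using \<open>c > 0\<close> step_nonzero[of j] by (simp add: w_def)
  qed
  then have "(\<Sum>m<N. \<Phi> (Suc m) - \<Phi> m) > 0"
    using period_pos by (intro sum_pos) auto
  moreover have "(\<Sum>m<N. \<Phi> (Suc m) - \<Phi> m) = \<Phi> N - \<Phi> 0"
    by (rule sum_lessThan_telescope)
  moreover have "\<Phi> N = \<Phi> 0"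
    by (simp add: \<Phi>_def periodic)
  ultimately show False
    by simp
qed

lemma tangent_coord_reflection_step:
  obtains t where "t > 0"
    "tangent_coord (edge (Suc j)) (x (Suc (Suc j))) - tangent_coord (edge (Suc j)) (x (Suc j)) =
       t * (tangent_coord (edge (Suc j)) (x (Suc j)) - tangent_coord (edge (Suc j)) (x j))"
proof -
  obtain c where "c > 0"
    "x (Suc (Suc j)) - x (Suc j) = of_real c * edge_reflect (edge (Suc j)) (x (Suc j) - x j)"
    by (rule reflection_edge)
  then show ?thesis
    using that[of c] tangent_coord_diff
    by (metis tangent_coord_edge_reflect tangent_coord_of_real_mult)
qed

lemma two_le_seg_add_seg_Suc:
  assumes side: "edge (Suc j) \<in> {1, 3, 5}"
  shows "2 \<le> seg j + seg (Suc j)"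
proof -
  let ?\<tau> = "tangent_coord (edge (Suc j))"
  obtain t where "t > 0"
    and "?\<tau> (x (Suc (Suc j))) - ?\<tau> (x (Suc j)) = t * (?\<tau> (x (Suc j)) - ?\<tau> (x j))"
    by (rule tangent_coord_reflection_step)
  then have "(?\<tau> (x j) \<le> ?\<tau> (x (Suc j)) \<and> ?\<tau> (x (Suc j)) \<le> ?\<tau> (x (Suc (Suc j)))) \<or>
      (?\<tau> (x (Suc j)) \<le> ?\<tau> (x j) \<and> ?\<tau> (x (Suc (Suc j))) \<le> ?\<tau> (x (Suc j)))"
    by (smt (verit) mult_pos_pos mult_pos_neg)
  then show ?thesis
    unfolding seg_def
    using two_le_seg_len_across_side_edge[OF on_edge_edge on_edge_edge on_edge_edge side]
      edge_Suc_neq[of j] edge_Suc_neq[of "Suc j"] by metis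
qed

lemma two_le_seg_if_return:
  assumes side: "edge (Suc j) \<in> {1, 3, 5}" and return: "x (Suc (Suc j)) = x j"
  shows "2 \<le> seg j"
proof -
  let ?\<tau> = "tangent_coord (edge (Suc j))"
  obtain t where "t > 0"
    and "?\<tau> (x (Suc (Suc j))) - ?\<tau> (x (Suc j)) = t * (?\<tau> (x (Suc j)) - ?\<tau> (x j))"
    by (rule tangent_coord_reflection_step)
  then have "(1 + t) * (?\<tau> (x j) - ?\<tau> (x (Suc j))) = 0"
    using return by (simp add: algebra_simps)
  then have "?\<tau> (x j) = ?\<tau> (x (Suc j))"
    using \<open>t > 0\<close> by simp
  then show ?thesis
    unfolding seg_def
    using two_le_seg_len_if_tangent_coord_eq[OF on_edge_edge on_edge_edge side] edge_Suc_neq[of j] by metis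
qed

lemma seg_eq_2_between_corner_edges:
  assumes "edge j \<in> {0, 2, 4}" "edge (Suc j) \<in> {0, 2, 4}"
  shows "seg j = 2"
  unfolding seg_def
  using seg_len_corner_edges[OF on_edge_edge on_edge_edge _ assms] edge_Suc_neq[of j] by metis

lemma two_le_seg_add_seg_Suc_unless_zigzag:
  assumes "\<not> (edge j \<in> {1, 3, 5} \<and> edge (Suc (Suc j)) \<in> {1, 3, 5})"
  shows "2 \<le> seg j + seg (Suc j)"
proof (cases "edge (Suc j) \<in> {1, 3, 5}")
  case True
  then show ?thesis
    by (rule two_le_seg_add_seg_Suc)
next
  case False
  then have corner: "edge (Suc j) \<in> {0, 2, 4}"
    using edge_side_or_corner by blast
  from assms consider "edge j \<in> {0, 2, 4}" | "edge (Suc (Suc j)) \<in> {0, 2, 4}"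
    using edge_side_or_corner by blast
  then show ?thesis
  proof cases
    case 1
    then show ?thesis
      using seg_eq_2_between_corner_edges[OF 1 corner] seg_nonneg[of "Suc j"] by simp
  next
    case 2
    then show ?thesis
      using seg_eq_2_between_corner_edges[OF corner 2] seg_nonneg[of j] by simp
  qed
qed

lemma four_consecutive_seg_le_sum_seg:
  assumes "N \<ge> 4"
  shows "seg j + seg (Suc j) + seg (Suc (Suc j)) + seg (Suc (Suc (Suc j))) \<le> (\<Sum>i<N. seg i)"
proof -
  have "(\<Sum>i<4. seg (j + i)) \<le> (\<Sum>i<N. seg (j + i))"
    using assms by (intro sum_mono2) (auto simp: seg_nonneg)
  also have "\<dots> = (\<Sum>i<N. seg i)"
    by (rule sum_lessThan_shift_periodic) (rule seg_periodic)
  finally show ?thesis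
    by (simp add: eval_nat_numeral)
qed

text \<open>Chords j and j + 1 can only be short together if x j and x (j + 2) lie on side edges, and
  then the pairs of chords meeting at x j and at x (j + 2) are long.\<close>

lemma four_le_sum_seg_if_period_ge_4:
  assumes "N \<ge> 4"
  shows "4 \<le> (\<Sum>i<N. seg i)"
proof (cases "\<exists>j. edge j \<in> {1, 3, 5} \<and> edge (Suc (Suc j)) \<in> {1, 3, 5}")
  case True
  then obtain j where side: "edge j \<in> {1, 3, 5}" "edge (Suc (Suc j)) \<in> {1, 3, 5}"
    by blast
  define j0 where "j0 = j + N - 1"
  have "Suc j0 = j + N" "Suc (Suc (Suc j0)) = Suc (Suc j) + N"
    using period_pos by (simp_all add: j0_def)
  then have "edge (Suc j0) \<in> {1, 3, 5}" "edge (Suc (Suc (Suc j0))) \<in> {1, 3, 5}"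
    using side by (simp_all only: edge_periodic)
  then show ?thesis
    using two_le_seg_add_seg_Suc[of j0] two_le_seg_add_seg_Suc[of "Suc (Suc j0)"]
      four_consecutive_seg_le_sum_seg[OF assms, of j0] by linarith
next
  case False
  then have "2 \<le> seg 0 + seg (Suc 0)" "2 \<le> seg (Suc (Suc 0)) + seg (Suc (Suc (Suc 0)))"
    using two_le_seg_add_seg_Suc_unless_zigzag by blast+
  then show ?thesis
    using four_consecutive_seg_le_sum_seg[OF assms, of 0] by linarith
qed

lemma four_le_sum_seg_if_period_2:
  assumes "N = 2"
  shows "4 \<le> (\<Sum>i<N. seg i)"
proof -
  have return: "x (Suc (Suc j)) = x j" for j
    using periodic[of j] assms by simp
  have "seg (Suc 0) = seg 0"
    using return[of 0] by (simp add: seg_def seg_len_commute)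
  moreover have "2 \<le> seg 0"
  proof (cases "edge (Suc 0) \<in> {1, 3, 5}")
    case True
    then show ?thesis
      using two_le_seg_if_return return by blast
  next
    case corner1: False
    show ?thesis
    proof (cases "edge 0 \<in> {1, 3, 5}")
      case True
      then have "2 \<le> seg (Suc 0)"
        using two_le_seg_if_return[of "Suc 0"] return edge_periodic[of 0] assms by simp
      then show ?thesis
        using \<open>seg (Suc 0) = seg 0\<close> by simp
    next
      case False
      then have "seg 0 = 2"
        using seg_eq_2_between_corner_edges[of 0] corner1 edge_side_or_corner by blast
      then show ?thesis
        by simp
    qed
  qed
  ultimately show ?thesis
    using assms by (auto simp: eval_nat_numeral)
qed

end

section \<open>Restricted closed geodesics\<close>

lemma periodic_billiard_trajectory_if_restricted_closed_geodesic:
  assumes "restricted_closed_geodesic xs"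
  shows "periodic_billiard_trajectory (\<lambda>j. xs ! (j mod length xs)) (length xs)"
proof -
  let ?N = "length xs"
  have N: "?N > 0"
    and on: "\<forall>j<?N. \<exists>k<6. xs ! j \<in> edge_interior k"
    and step: "\<forall>j<?N. xs ! j \<noteq> xs ! ((j + 1) mod ?N)"
    and refl: "\<forall>j<?N. \<forall>k<6. xs ! ((j + 1) mod ?N) \<in> edge_interior k \<longrightarrow>
      (\<exists>c>0. xs ! ((j + 2) mod ?N) - xs ! ((j + 1) mod ?N) =
              of_real c * edge_reflect k (xs ! ((j + 1) mod ?N) - xs ! j))"
    using assms unfolding restricted_closed_geodesic_def Let_def by auto
  have Suc_mod: "(j mod ?N + 1) mod ?N = Suc j mod ?N" "(j mod ?N + 2) mod ?N = Suc (Suc j) mod ?N" for j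
    by (simp_all add: mod_Suc_eq mod_add_left_eq flip: add_2_eq_Suc')
  show ?thesis
  proof
    show "xs ! ((j + ?N) mod ?N) = xs ! (j mod ?N)" for j
      by simp
    show "\<exists>k<6. xs ! (j mod ?N) \<in> edge_interior k" for j
      using on N by simp
    show "xs ! (j mod ?N) \<noteq> xs ! (Suc j mod ?N)" for j
      using step[rule_format, of "j mod ?N"] N Suc_mod by simp
    show "\<exists>c>0. xs ! (Suc (Suc j) mod ?N) - xs ! (Suc j mod ?N) =
        of_real c * edge_reflect k (xs ! (Suc j mod ?N) - xs ! (j mod ?N))"
      if "k < 6" "xs ! (Suc j mod ?N) \<in> edge_interior k" for j k
      using refl[rule_format, of "j mod ?N" k] that N Suc_mod by simp
  qed (use N in simp)
qed

lemma geodesic_length_ge_4: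
  assumes "restricted_closed_geodesic xs"
  shows "4 \<le> geodesic_length xs"
proof -
  let ?N = "length xs"
  interpret periodic_billiard_trajectory "\<lambda>j. xs ! (j mod ?N)" ?N
    using assms by (rule periodic_billiard_trajectory_if_restricted_closed_geodesic)
  have "geodesic_length xs = (\<Sum>i<?N. seg i)"
    by (simp add: geodesic_length_def seg_def)
  moreover have "even ?N"
    using assms by (simp add: restricted_closed_geodesic_def Let_def)
  then have "?N = 2 \<or> ?N \<ge> 4"
    using period_pos by presburger
  ultimately show ?thesis
    using four_le_sum_seg_if_period_2 four_le_sum_seg_if_period_ge_4 by auto
qed

lemma two_point_restricted_closed_geodesic:
  assumes a: "ka < 6" "a \<in> edge_interior ka" and b: "kb < 6" "b \<in> edge_interior kb"
    and "a \<noteq> b"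
    and reflect_b: "\<exists>c>0. a - b = of_real c * edge_reflect kb (b - a)"
    and reflect_a: "\<exists>c>0. b - a = of_real c * edge_reflect ka (a - b)"
  shows "restricted_closed_geodesic [a, b]"
proof -
  have all_less_2: "(\<forall>j<2. P j) \<longleftrightarrow> P 0 \<and> P 1" for P :: "nat \<Rightarrow> bool"
    by (auto simp: numeral_2_eq_2 less_Suc_eq)
  have idx: "length [a, b] = 2" "[a, b] ! 0 = a" "[a, b] ! 1 = b"
    "(0 + 1) mod 2 = (1::nat)" "(0 + 2) mod 2 = (0::nat)" "(1 + 1) mod 2 = (0::nat)" "(1 + 2) mod 2 = (1::nat)"
    by simp_all
  show ?thesis
    unfolding restricted_closed_geodesic_def Let_def idx(1) all_less_2
    unfolding idx(4-7) idx(2,3)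
  proof (intro conjI allI impI)
    show "\<exists>c>0. a - b = of_real c * edge_reflect k (b - a)" if "k < 6" "b \<in> edge_interior k" for k
      using edge_interior_disjoint[OF that(1) b(1) that(2) b(2)] reflect_b by simp
    show "\<exists>c>0. b - a = of_real c * edge_reflect k (a - b)" if "k < 6" "a \<in> edge_interior k" for k
      using edge_interior_disjoint[OF that(1) a(1) that(2) a(2)] reflect_a by simp
  qed (use a b \<open>a \<noteq> b\<close> in auto)
qed

lemma i_in_edge_interior: "\<i> \<in> edge_interior 1"
  and neg_i_in_edge_interior: "- \<i> \<in> edge_interior 4"
proof -
  have "midpoint (hex_vert 1) (hex_vert (Suc 1)) = \<i>" "midpoint (hex_vert 4) (hex_vert (Suc 4)) = - \<i>"
    "hex_vert 1 \<noteq> hex_vert (Suc 1)" "hex_vert 4 \<noteq> hex_vert (Suc 4)"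
    by (simp_all add: midpoint_def hex_vert_eq zeta_powers complex_eq_iff field_simps del: One_nat_def)
  then show "\<i> \<in> edge_interior 1" "- \<i> \<in> edge_interior 4"
    unfolding edge_interior_def by (metis midpoint_in_open_segment)+
qed

lemma restricted_closed_geodesic_vertical: "restricted_closed_geodesic [- \<i>, \<i>]"
proof (rule two_point_restricted_closed_geodesic[OF _ neg_i_in_edge_interior _ i_in_edge_interior])
  show "\<exists>c>0. - \<i> - \<i> = of_real c * edge_reflect 1 (\<i> - - \<i>)"
    "\<exists>c>0. \<i> - - \<i> = of_real c * edge_reflect 4 (- \<i> - \<i>)"
    by (simp_all only: edge_reflect_def hex_normal_coords) (auto simp: complex_eq_iff intro!: exI[of _ 1])
qed (simp_all add: complex_eq_iff)

lemma geodesic_length_vertical: "geodesic_length [- \<i>, \<i>] = 4"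
proof -
  have "seg_len (- \<i>) \<i> = 2"
    by (simp add: seg_len_eq proj_coord_hex hex_x_def clamp01_def del: One_nat_def)
  then show ?thesis
    by (simp add: geodesic_length_def eval_nat_numeral seg_len_commute)
qed

theorem proposition4p2:
  shows "restricted_closed_geodesic [-\<i>, \<i>] \<and> geodesic_length [-\<i>, \<i>] = 4 \<and>
         (\<forall>xs. restricted_closed_geodesic xs \<longrightarrow> geodesic_length xs \<ge> 4)"
  using restricted_closed_geodesic_vertical geodesic_length_vertical geodesic_length_ge_4 by blast

end
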